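(* Let $n\geq1$ and let $a_1,\ldots,a_n$ be positive real numbers. Let $A\subset\mathbb{R}^n$ be the ray emanating from $0$ and passing through $(a_1,\ldots,a_n)$. Then there exists an infinite sequence of points $x_1,x_2,\ldots$ in $\mathbb{Z}^n$ such that $x_1$ is a standard coordinate vector, $x_{i+1}-x_i$ is a standard coordinate vector for every $i$, and each $x_i$ is within Euclidean distance $\sqrt{2n}$ of $A$.
   Context: A standard coordinate vector is one of the standard basis vectors $e_1,\ldots,e_n$ of $\mathbb{R}^n$. *)

theory Defs
  imports "HOL-Analysis.Analysis"
begin

definition std_coord_vec :: "real^'n \<Rightarrow> bool" where
  "std_coord_vec v \<longleftrightarrow> (\<exists>i. v = axis i 1)"

definition ray_from_origin :: "real^'n \<Rightarrow> (real^'n) set" where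
  "ray_from_origin a = {t *\<^sub>R a | t. t \<ge> 0}"

definition integer_point :: "real^'n \<Rightarrow> bool" where
  "integer_point x \<longleftrightarrow> (\<forall>i. x $ i \<in> \<int>)"

end

theory Submission
  imports Defs
begin

text \<open>Walk greedily from the origin, always raising the coordinate j that minimises
(x_j + 1) / a_j. This keeps every ratio x_i / a_i at most every (x_j + 1) / a_j, so with
t = max_i x_i / a_i each coordinate satisfies 0 \<le> t a_i - x_i \<le> 1; hence the point is
within distance sqrt n of t a, which lies on the ray. Dropping the initial origin gives
a walk starting at a standard coordinate vector.\<close>

definition balanced :: "real^'n \<Rightarrow> real^'n \<Rightarrow> bool" where
  "balanced a x \<longleftrightarrow> (\<forall>i. 0 \<le> x $ i) \<and> (\<forall>i j. x $ i / a $ i \<le> (x $ j + 1) / a $ j)"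

definition greedy_coord :: "real^'n \<Rightarrow> real^'n \<Rightarrow> 'n" where
  "greedy_coord a x = arg_min_on (\<lambda>j. (x $ j + 1) / a $ j) UNIV"

primrec greedy_walk :: "real^'n \<Rightarrow> nat \<Rightarrow> real^'n" where
  "greedy_walk a 0 = 0"
| "greedy_walk a (Suc k) = greedy_walk a k + axis (greedy_coord a (greedy_walk a k)) 1"

lemma greedy_coord_least:
  fixes a x :: "real^'n"
  shows "(x $ greedy_coord a x + 1) / a $ greedy_coord a x \<le> (x $ j + 1) / a $ j"
  unfolding greedy_coord_def by (rule arg_min_least) auto

lemma balanced_zero:
  fixes a :: "real^'n"
  assumes "\<forall>i. a $ i > 0"
  shows "balanced a 0"
  using assms by (simp add: balanced_def less_imp_le)

lemma balanced_greedy_step: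
  fixes a x :: "real^'n"
  assumes pos: "\<forall>i. a $ i > 0" and bal: "balanced a x"
  shows "balanced a (x + axis (greedy_coord a x) 1)"
proof -
  let ?g = "greedy_coord a x"
  let ?y = "x + axis ?g 1"
  have "?y $ i / a $ i \<le> (?y $ j + 1) / a $ j" for i j
  proof -
    have "?y $ i / a $ i \<le> (x $ j + 1) / a $ j"
    proof (cases "i = ?g")
      case True
      then show ?thesis using greedy_coord_least[of x a j] by (simp add: axis_def)
    next
      case False
      then show ?thesis using bal by (simp add: balanced_def axis_def)
    qed
    also have "\<dots> \<le> (?y $ j + 1) / a $ j"
      using pos by (intro divide_right_mono) (auto simp: axis_def less_imp_le)
    finally show ?thesis .
  qed
  moreover have "\<forall>i. 0 \<le> ?y $ i"
    using bal by (simp add: balanced_def axis_def)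
  ultimately show ?thesis unfolding balanced_def by blast
qed

lemma balanced_greedy_walk:
  fixes a :: "real^'n"
  assumes "\<forall>i. a $ i > 0"
  shows "balanced a (greedy_walk a k)"
  by (induction k) (simp_all add: balanced_zero balanced_greedy_step assms)

lemma integer_point_greedy_walk: "integer_point (greedy_walk a k)"
  by (induction k) (auto simp: integer_point_def axis_def)

lemma infdist_ray_le_if_balanced:
  fixes a x :: "real^'n"
  assumes pos: "\<forall>i. a $ i > 0" and bal: "balanced a x"
  shows "infdist x (ray_from_origin a) \<le> sqrt (real CARD('n))"
proof -
  let ?ratio = "\<lambda>i. x $ i / a $ i"
  define t where "t = Max (range ?ratio)"
  have "t \<in> range ?ratio"
    unfolding t_def by (rule Max_in) auto
  then obtain i0 where i0: "t = ?ratio i0" by blast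
  have "0 \<le> t"
    using bal pos i0 by (simp add: balanced_def less_imp_le)
  then have on_ray: "t *\<^sub>R a \<in> ray_from_origin a"
    unfolding ray_from_origin_def by blast
  have close: "\<bar>x $ j - t * a $ j\<bar> \<le> 1" for j
  proof -
    have aj: "a $ j > 0" using pos by blast
    have "?ratio j \<le> t" unfolding t_def by (auto intro: Max_ge)
    then have "x $ j \<le> t * a $ j" using aj by (simp add: divide_le_eq)
    moreover have "t \<le> (x $ j + 1) / a $ j" using bal i0 by (simp add: balanced_def)
    then have "t * a $ j \<le> x $ j + 1" using aj by (simp add: le_divide_eq)
    ultimately show ?thesis by linarith
  qed
  have "infdist x (ray_from_origin a) \<le> dist x (t *\<^sub>R a)"
    by (rule infdist_le[OF on_ray])
  also have "\<dots> = sqrt (\<Sum>j\<in>UNIV. (x $ j - t * a $ j)\<^sup>2)"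
    unfolding dist_norm norm_vec_def L2_set_def by simp
  also have "\<dots> \<le> sqrt (\<Sum>j\<in>(UNIV::'n set). 1)"
    using close by (intro real_sqrt_le_mono sum_mono) (simp add: abs_square_le_1)
  finally show ?thesis by simp
qed

theorem proposition2p8:
  fixes a :: "real^'n"
  assumes "\<forall>i. a $ i > 0"
  shows "\<exists>x :: nat \<Rightarrow> real^'n.
           (\<forall>k. integer_point (x k)) \<and>
           std_coord_vec (x 0) \<and>
           (\<forall>k. std_coord_vec (x (Suc k) - x k)) \<and>
           (\<forall>k. infdist (x k) (ray_from_origin a) \<le> sqrt (2 * real CARD('n)))"
proof (intro exI conjI allI)
  let ?x = "\<lambda>k. greedy_walk a (Suc k)"
  show "integer_point (?x k)" for k
    by (rule integer_point_greedy_walk)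
  show "std_coord_vec (?x 0)"
    unfolding std_coord_vec_def by auto
  show "std_coord_vec (?x (Suc k) - ?x k)" for k
    unfolding std_coord_vec_def by (metis add_diff_cancel_left' greedy_walk.simps(2))
  have "infdist (?x k) (ray_from_origin a) \<le> sqrt (real CARD('n))" for k
    using infdist_ray_le_if_balanced[OF assms balanced_greedy_walk[OF assms]] .
  then show "infdist (?x k) (ray_from_origin a) \<le> sqrt (2 * real CARD('n))" for k
    by (rule order_trans) simp
qed

end
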